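(* Let $p$ be a prime and let $A$ be a Henselian valuation ring which is not a field, with field of fractions $K$, maximal ideal $\mathfrak{m}_A$, residue field $k$ and valuation $v_A$, where $\operatorname{char}K=\operatorname{char}k=p$. Let $L/K$ be a non-trivial Artin–Schreier extension. Then any $f\in K$ generating $L/K$ that satisfies one of the following properties is best: (i) $f\notin A$ and $p\nmid v_A(f)$; (ii) $f\notin A$ and $f=ug^{-p}$ for some $0\neq g\in\mathfrak{m}_A$ and $u\in A^\times$ whose residue class is not a $p$-th power in $k$; (iii) $f\in A^\times$ and $\bar f\notin\{x^p-x\mid x\in k\}$.
   Context: An element $f\in K$ generates $L/K$ if $L=K(\alpha)$ for a root $\alpha$ of $T^p-T=f$. Any two generators $f,f'$ satisfy $f'=i(f+h^p-h)$ for some $h\in K$, $1\le i\le p-1$. A generator $f$ is best if $v_A(f)\ge v_A(f')$ for every generator $f'$ of $L/K$, i.e. $v_A(1/f)=\inf_{h\in K,1\le i\le p-1}v_A(1/(i(f+h^p-h)))$. *)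

theory Defs
  imports "HOL-Computational_Algebra.Polynomial"
begin

text \<open>Conventions. We work inside an ambient field of type 'l, which plays the role of L.
  K is a subfield of 'l given as a set; A is a subset of K.\<close>

definition is_subfield :: "'a::field set \<Rightarrow> bool" where
  "is_subfield F \<longleftrightarrow> 0 \<in> F \<and> 1 \<in> F \<and>
     (\<forall>x\<in>F. \<forall>y\<in>F. x + y \<in> F \<and> x - y \<in> F \<and> x * y \<in> F) \<and>
     (\<forall>x\<in>F. inverse x \<in> F)"

definition gen_field :: "'a::field set \<Rightarrow> 'a set" where
  "gen_field S = \<Inter>{F. is_subfield F \<and> S \<subseteq> F}"

definition is_subring :: "'a::field set \<Rightarrow> bool" where
  "is_subring R \<longleftrightarrow> 0 \<in> R \<and> 1 \<in> R \<and>
     (\<forall>x\<in>R. \<forall>y\<in>R. x + y \<in> R \<and> x - y \<in> R \<and> x * y \<in> R)"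

definition valuation_ring :: "'a::field set \<Rightarrow> 'a set \<Rightarrow> bool" where
  "valuation_ring K A \<longleftrightarrow> is_subfield K \<and> is_subring A \<and> A \<subseteq> K \<and>
     (\<forall>x\<in>K. x \<noteq> 0 \<longrightarrow> x \<in> A \<or> inverse x \<in> A)"

definition units_of_ring :: "'a::field set \<Rightarrow> 'a set" where
  "units_of_ring A = {x \<in> A. x \<noteq> 0 \<and> inverse x \<in> A}"

definition max_ideal :: "'a::field set \<Rightarrow> 'a set" where
  "max_ideal A = {x \<in> A. x = 0 \<or> inverse x \<notin> A}"

definition henselian :: "'a::field set \<Rightarrow> bool" where
  "henselian A \<longleftrightarrow>
     (\<forall>P::'a poly. (\<forall>i. coeff P i \<in> A) \<and> lead_coeff P = 1 \<longrightarrow>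
        (\<forall>a\<in>A. poly P a \<in> max_ideal A \<and> poly (pderiv P) a \<notin> max_ideal A \<longrightarrow>
           (\<exists>b\<in>A. poly P b = 0 \<and> b - a \<in> max_ideal A)))"

text \<open>The valuation v_A : K^\<times> \<rightarrow> K^\<times>/A^\<times> (with v_A(0) = \<infinity>), ordered by
  v_A(x) \<le> v_A(y) iff y \<in> x A. \<close>
definition val_le :: "'a::field set \<Rightarrow> 'a \<Rightarrow> 'a \<Rightarrow> bool" where
  "val_le A x y \<longleftrightarrow> y = 0 \<or> (x \<noteq> 0 \<and> y / x \<in> A)"

text \<open>p divides v_A(f) in the value group K^\<times>/A^\<times> (for f \<noteq> 0):
   v_A(f) = p * v_A(g) for some g \<in> K^\<times>.\<close>
definition p_dvd_val :: "'a::field set \<Rightarrow> 'a set \<Rightarrow> nat \<Rightarrow> 'a \<Rightarrow> bool" where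
  "p_dvd_val K A p f \<longleftrightarrow> (\<exists>g\<in>K. g \<noteq> 0 \<and> f / g ^ p \<in> units_of_ring A)"

text \<open>f generates L/K, where L is the whole ambient field 'l: f \<in> K and
  L = K(\<alpha>) for a root \<alpha> of T^p - T = f.\<close>
definition AS_generates :: "nat \<Rightarrow> 'a::field set \<Rightarrow> 'a \<Rightarrow> bool" where
  "AS_generates p K f \<longleftrightarrow> f \<in> K \<and>
     (\<exists>\<alpha>. \<alpha> ^ p - \<alpha> = f \<and> gen_field (insert \<alpha> K) = UNIV)"

definition best_generator :: "nat \<Rightarrow> 'a::field set \<Rightarrow> 'a set \<Rightarrow> 'a \<Rightarrow> bool" where
  "best_generator p K A f \<longleftrightarrow> AS_generates p K f \<and>
     (\<forall>f'. AS_generates p K f' \<longrightarrow> val_le A f' f)"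

end

theory Submission
  imports Defs "HOL-Computational_Algebra.Polynomial_Factorial"
begin

(* Let L = K(\<alpha>) with \<alpha>\<^sup>p - \<alpha> = f. Any other generator f' has the form j f + h\<^sup>p - h
   with 0 < j < p and h \<in> K: write a root \<beta> of T\<^sup>p - T - f' as a K-polynomial in \<alpha>;
   replacing \<alpha> by \<alpha> + 1 turns \<beta> into another root \<beta> + j, so \<beta> - j \<alpha> is fixed by this
   substitution and lies in K. The field-theoretic input (elements of L are K-polynomials
   in \<alpha>, and T\<^sup>p - T - f has no nontrivial monic factor over K) comes from the splitting
   T\<^sup>p - T - f = \<Prod>\<^sub>k (T - \<alpha> - k).
   It remains to show v(j f + h\<^sup>p - h) \<le> v(f). If one of f and h\<^sup>p - h has strictly smaller
   valuation, it dominates the sum. Equal valuations are impossible in case (i) since p does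
   not divide v(f); in cases (ii) and (iii) a cancellation of the leading terms would solve
   the residue equation excluded by hypothesis. *)

section \<open>Subrings, subfields and polynomials over them\<close>

lemma subfield_is_subring: "is_subfield F \<Longrightarrow> is_subring F"
  by (simp add: is_subfield_def is_subring_def)

lemma subfield_inverse: "is_subfield F \<Longrightarrow> x \<in> F \<Longrightarrow> inverse x \<in> F"
  by (simp add: is_subfield_def)

lemma subfield_divide: "is_subfield F \<Longrightarrow> x \<in> F \<Longrightarrow> y \<in> F \<Longrightarrow> x / y \<in> F"
  by (simp add: is_subfield_def divide_inverse)

lemma gen_field_least: "is_subfield F \<Longrightarrow> S \<subseteq> F \<Longrightarrow> gen_field S \<subseteq> F"
  unfolding gen_field_def by blast

lemma gen_field_insert_eq_UNIV_imp_notin: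
  assumes "is_subfield K" "K \<noteq> UNIV" "gen_field (insert \<alpha> K) = UNIV"
  shows "\<alpha> \<notin> K"
  using assms gen_field_least[of K "insert \<alpha> K"] by auto

context
  fixes R :: "'a::field set"
  assumes R: "is_subring R"
begin

lemma subring_zero: "0 \<in> R" and subring_one: "1 \<in> R"
  using R by (simp_all add: is_subring_def)

lemma subring_add: "x \<in> R \<Longrightarrow> y \<in> R \<Longrightarrow> x + y \<in> R"
  and subring_diff: "x \<in> R \<Longrightarrow> y \<in> R \<Longrightarrow> x - y \<in> R"
  and subring_mult: "x \<in> R \<Longrightarrow> y \<in> R \<Longrightarrow> x * y \<in> R"
  using R by (simp_all add: is_subring_def)

lemma subring_uminus: "x \<in> R \<Longrightarrow> - x \<in> R"
  using subring_diff[OF subring_zero] by fastforce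

lemma subring_power: "x \<in> R \<Longrightarrow> x ^ n \<in> R"
  by (induction n) (simp_all add: subring_one subring_mult)

lemma subring_of_nat: "of_nat n \<in> R"
  by (induction n) (simp_all add: subring_zero subring_one subring_add)

lemma subring_sum: "(\<And>i. i \<in> S \<Longrightarrow> g i \<in> R) \<Longrightarrow> sum g S \<in> R"
  by (induction S rule: infinite_finite_induct) (simp_all add: subring_zero subring_add)

end

definition polys_over :: "'a::zero set \<Rightarrow> 'a poly set" where
  "polys_over R = {P. \<forall>i. coeff P i \<in> R}"

lemma polys_overI: "(\<And>i. coeff P i \<in> R) \<Longrightarrow> P \<in> polys_over R"
  and polys_overD: "P \<in> polys_over R \<Longrightarrow> coeff P i \<in> R"
  by (simp_all add: polys_over_def)

context
  fixes R :: "'a::field set"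
  assumes R: "is_subring R"
begin

lemma polys_over_0: "0 \<in> polys_over R"
  by (rule polys_overI) (simp add: subring_zero R)

lemma polys_over_pCons: "c \<in> R \<Longrightarrow> P \<in> polys_over R \<Longrightarrow> pCons c P \<in> polys_over R"
  by (rule polys_overI) (simp add: coeff_pCons polys_overD split: nat.split)

lemma polys_over_const: "c \<in> R \<Longrightarrow> [:c:] \<in> polys_over R"
  by (simp add: polys_over_pCons polys_over_0)

lemma polys_over_1: "1 \<in> polys_over R"
  using polys_over_const[OF subring_one[OF R]] by (simp add: one_pCons)

lemma polys_over_add: "P \<in> polys_over R \<Longrightarrow> Q \<in> polys_over R \<Longrightarrow> P + Q \<in> polys_over R"
  and polys_over_diff: "P \<in> polys_over R \<Longrightarrow> Q \<in> polys_over R \<Longrightarrow> P - Q \<in> polys_over R"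
  by (simp_all add: polys_over_def subring_add subring_diff R)

lemma polys_over_smult: "c \<in> R \<Longrightarrow> P \<in> polys_over R \<Longrightarrow> smult c P \<in> polys_over R"
  by (simp add: polys_over_def subring_mult R)

lemma polys_over_monom: "c \<in> R \<Longrightarrow> monom c n \<in> polys_over R"
  by (rule polys_overI) (simp add: coeff_monom subring_zero R)

lemma polys_over_mult: "P \<in> polys_over R \<Longrightarrow> Q \<in> polys_over R \<Longrightarrow> P * Q \<in> polys_over R"
  by (rule polys_overI) (simp add: coeff_mult polys_overD subring_mult subring_sum R)

lemma polys_over_power: "P \<in> polys_over R \<Longrightarrow> P ^ n \<in> polys_over R"
  by (induction n) (simp_all add: polys_over_1 polys_over_mult)

lemma polys_over_prod: "(\<And>i. i \<in> S \<Longrightarrow> P i \<in> polys_over R) \<Longrightarrow> prod P S \<in> polys_over R"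
  by (induction S rule: infinite_finite_induct) (simp_all add: polys_over_1 polys_over_mult)

lemma polys_over_pcompose:
  "P \<in> polys_over R \<Longrightarrow> Q \<in> polys_over R \<Longrightarrow> pcompose P Q \<in> polys_over R"
proof (induction P)
  case (pCons a P)
  have "a \<in> R" "P \<in> polys_over R"
    using polys_overD[OF pCons.prems(1), of 0] polys_overD[OF pCons.prems(1), of "Suc _"]
    by (auto intro: polys_overI)
  with pCons show ?case
    by (simp add: pcompose_pCons polys_over_add polys_over_mult polys_over_const)
qed (simp add: polys_over_0)

lemma polys_over_mod_monic:
  assumes G: "G \<in> polys_over R" "lead_coeff G = 1" and P: "P \<in> polys_over R"
  shows "P mod G \<in> polys_over R"
  using P
proof (induction "degree P" arbitrary: P rule: less_induct)
  case (less P)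
  show ?case
  proof (cases "degree P < degree G")
    case True
    then show ?thesis using less.prems by (simp add: mod_poly_less)
  next
    case False
    define Q where "Q = monom (lead_coeff P) (degree P - degree G)"
    define P' where "P' = P - Q * G"
    have P': "P' \<in> polys_over R"
      unfolding P'_def Q_def using less.prems G
      by (simp add: polys_over_diff polys_over_mult polys_over_monom polys_overD)
    have mod_eq: "P mod G = P' mod G"
      unfolding P'_def by (metis diff_add_cancel mod_mult_self1)
    have "degree (Q * G) \<le> degree Q + degree G"
      by (rule degree_mult_le)
    also have "\<dots> \<le> degree P"
      unfolding Q_def using False degree_monom_le[of "lead_coeff P" "degree P - degree G"] by arith
    finally have degQG: "degree (Q * G) \<le> degree P" .
    have "coeff P' (degree P) = 0"
      unfolding P'_def Q_def using False G by (simp add: coeff_monom_mult)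
    moreover have "degree P' \<le> degree P"
      unfolding P'_def using degQG by (simp add: degree_diff_le)
    ultimately have "P' = 0 \<or> degree P' < degree P"
      by (metis leading_coeff_0_iff order_le_less)
    then show ?thesis
      using less.hyps[OF _ P'] by (auto simp: mod_eq polys_over_0)
  qed
qed

end

lemma poly_mod_eq_0:
  "poly P x = 0 \<Longrightarrow> poly G x = 0 \<Longrightarrow> poly (P mod G :: 'a::field poly) x = 0"
  by (simp flip: minus_div_mult_eq_mod)

section \<open>Artin--Schreier polynomials\<close>

definition AS_poly :: "nat \<Rightarrow> 'a::comm_ring_1 \<Rightarrow> 'a poly" where
  "AS_poly p c = monom 1 p - [:c, 1:]"

lemma poly_AS_poly: "poly (AS_poly p c) x = x ^ p - x - c"
  by (simp add: AS_poly_def poly_monom)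

lemma AS_poly_in_polys_over:
  "is_subring R \<Longrightarrow> c \<in> R \<Longrightarrow> AS_poly p c \<in> polys_over R"
  unfolding AS_poly_def
  by (intro polys_over_diff polys_over_monom polys_over_pCons polys_over_const subring_one)

lemma
  assumes "2 \<le> p"
  shows degree_AS_poly: "degree (AS_poly p (c::'a::field)) = p"
    and lead_coeff_AS_poly: "lead_coeff (AS_poly p c) = 1"
proof -
  have "degree [:c, 1::'a:] < degree (monom (1::'a) p)"
    using assms by (simp add: degree_monom_eq)
  then show deg: "degree (AS_poly p c) = p"
    unfolding AS_poly_def diff_conv_add_uminus
    by (subst degree_add_eq_left) (simp_all add: degree_monom_eq del: minus_pCons)
  show "lead_coeff (AS_poly p c) = 1"
    unfolding deg unfolding AS_poly_def using assms by (simp add: coeff_pCons split: nat.split)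
qed

lemma monic_dvd_prod_linear:
  fixes b :: "'b \<Rightarrow> 'a::field"
  assumes "finite S" "lead_coeff G = 1" "G dvd (\<Prod>k\<in>S. [:-b k, 1:])"
  shows "\<exists>S'\<subseteq>S. G = (\<Prod>k\<in>S'. [:-b k, 1:])"
  using assms
proof (induction S arbitrary: G rule: finite_induct)
  case empty
  then obtain c where "G = [:c:]"
    by (auto simp: is_unit_poly_iff)
  with empty.prems show ?case
    by (simp add: one_pCons)
next
  case (insert a S)
  define L where "L = [:-b a, 1:]"
  have L: "prime_elem L"
    unfolding L_def by (rule prime_elem_linear_field_poly) simp
  have dvd: "G dvd L * (\<Prod>k\<in>S. [:-b k, 1:])"
    using insert by (simp add: L_def)
  show ?case
  proof (cases "L dvd G")
    case True
    then obtain G' where G': "G = L * G'" ..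
    have "lead_coeff G = lead_coeff L * lead_coeff G'"
      unfolding G' by (rule lead_coeff_mult)
    then have "lead_coeff G' = 1"
      using insert.prems(1) by (simp add: L_def)
    moreover have "G' dvd (\<Prod>k\<in>S. [:-b k, 1:])"
      using dvd L by (simp add: G' prime_elem_not_zeroI)
    ultimately obtain S' where "S' \<subseteq> S" "G' = (\<Prod>k\<in>S'. [:-b k, 1:])"
      using insert.IH by blast
    moreover from this have "a \<notin> S'" "finite S'"
      using insert.hyps by (auto intro: finite_subset)
    ultimately show ?thesis
      by (intro exI[of _ "insert a S'"]) (auto simp: G' L_def)
  next
    case False
    obtain H where H: "L * (\<Prod>k\<in>S. [:-b k, 1:]) = G * H"
      using dvd ..
    have "L dvd G * H"
      by (simp flip: H)
    with L False have "L dvd H"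
      by (simp add: prime_elem_dvd_mult_iff)
    then obtain H' where "H = L * H'" ..
    with H L have "(\<Prod>k\<in>S. [:-b k, 1:]) = G * H'"
      by (simp add: ac_simps prime_elem_not_zeroI)
    then have "G dvd (\<Prod>k\<in>S. [:-b k, 1:])" ..
    then obtain S' where "S' \<subseteq> S" "G = (\<Prod>k\<in>S'. [:-b k, 1:])"
      using insert.IH insert.prems(1) by blast
    then show ?thesis
      by blast
  qed
qed

lemma coeff_prod_linear_subdegree:
  fixes b :: "'b \<Rightarrow> 'a::field"
  assumes "finite S" "S \<noteq> {}"
  shows "coeff (\<Prod>k\<in>S. [:-b k, 1:]) (card S - 1) = - (\<Sum>k\<in>S. b k)"
  using assms
proof (induction S rule: finite_ne_induct)
  case (insert a S)
  define P where "P = (\<Prod>k\<in>S. [:-b k, 1::'a:])"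
  have "degree P = card S"
    unfolding P_def by (simp add: degree_prod_sum_eq)
  moreover have "lead_coeff P = 1"
    unfolding P_def by (simp only: lead_coeff_prod) simp
  ultimately have "coeff P (card S) = 1"
    by simp
  moreover obtain m where m: "card S = Suc m"
    using insert.hyps by (cases "card S") auto
  moreover have "coeff P (card S - 1) = - (\<Sum>k\<in>S. b k)"
    using insert.IH by (simp add: P_def)
  ultimately have "coeff (smult (- b a) P + pCons 0 P) (Suc m) = - (\<Sum>k\<in>insert a S. b k)"
    using insert.hyps by simp
  moreover have "(\<Prod>k\<in>insert a S. [:-b k, 1:]) = smult (- b a) P + pCons 0 P"
    using insert.hyps by (simp add: P_def mult_pCons_left)
  ultimately show ?case
    using insert.hyps m by simp
qed simp

context
  fixes p :: nat
  assumes p_prime: "prime p" and char_p: "CHAR('a::field) = p"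
  notes p_ge_2 = prime_ge_2_nat[OF p_prime]
begin

lemma frobenius_add: "((x::'a) + y) ^ p = x ^ p + y ^ p"
  using p_prime char_p by (intro freshmans_dream) simp_all

lemma frobenius_of_nat: "(of_nat k :: 'a) ^ p = of_nat k"
  by (induction k) (simp_all add: frobenius_add prime_gt_0_nat[OF p_prime])

lemma frobenius_neg_div_fixed:
  "(i::'a) ^ p = i \<Longrightarrow> (- (y / i)) ^ p = - (y ^ p / i)"
  using minus_power_prime_CHAR[where 'a='a, of p "y / i"] p_prime char_p by (simp add: power_divide)

lemma of_nat_eq_0_iff_dvd_char: "(of_nat k :: 'a) = 0 \<longleftrightarrow> p dvd k"
  using char_p by (simp add: of_nat_eq_0_iff_char_dvd)

lemma inj_on_of_nat_below_char: "inj_on (of_nat :: nat \<Rightarrow> 'a) {..<p}"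
proof (rule inj_onI)
  fix j k assume "j \<in> {..<p}" "k \<in> {..<p}" "(of_nat j :: 'a) = of_nat k"
  then have "p dvd (max j k - min j k)" "max j k - min j k < p"
    by (auto simp flip: of_nat_eq_0_iff_dvd_char simp: of_nat_diff max_def min_def)
  then have "max j k - min j k = 0"
    using nat_dvd_not_less by blast
  then show "j = k"
    by (simp add: max_def min_def split: if_splits)
qed

lemma char_le_degree_if_vanishes_on_translates:
  fixes Q :: "'a poly"
  assumes "Q \<noteq> 0" "\<And>k. k < p \<Longrightarrow> poly Q (a + of_nat k) = 0"
  shows "p \<le> degree Q"
proof -
  have "inj_on (\<lambda>k. a + of_nat k :: 'a) {..<p}"
    using inj_on_of_nat_below_char by (auto simp: inj_on_def)
  then have "p = card ((\<lambda>k. a + of_nat k) ` {..<p})"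
    by (simp add: card_image)
  also have "\<dots> \<le> card {x. poly Q x = 0}"
    using assms by (intro card_mono poly_roots_finite) auto
  also have "\<dots> \<le> degree Q"
    using assms(1) by (rule card_poly_roots_bound)
  finally show ?thesis .
qed

lemma AS_poly_eq_prod:
  assumes "(a::'a) ^ p - a = c"
  shows "AS_poly p c = (\<Prod>k<p. [:- (a + of_nat k), 1:])"
proof (rule ccontr)
  define P where "P = (\<Prod>k<p. [:- (a + of_nat k), 1::'a:])"
  assume "AS_poly p c \<noteq> (\<Prod>k<p. [:- (a + of_nat k), 1:])"
  then have ne: "AS_poly p c - P \<noteq> 0"
    by (simp add: P_def)
  have deg_P: "degree P = p"
    unfolding P_def by (simp add: degree_prod_sum_eq)
  have "lead_coeff P = 1"
    unfolding P_def by (simp only: lead_coeff_prod) simp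
  then have lead: "coeff (AS_poly p c - P) p = 0"
    using deg_P lead_coeff_AS_poly[OF p_ge_2, of c] degree_AS_poly[OF p_ge_2, of c]
    by simp
  have "degree (AS_poly p c - P) \<le> p"
    using p_ge_2 deg_P by (intro degree_diff_le) (simp_all add: degree_AS_poly)
  moreover have "degree (AS_poly p c - P) \<noteq> p"
    using lead ne by (metis leading_coeff_0_iff)
  ultimately have "degree (AS_poly p c - P) < p"
    by simp
  moreover have "p \<le> degree (AS_poly p c - P)"
  proof (rule char_le_degree_if_vanishes_on_translates[OF ne])
    fix k assume "k < p"
    then have "poly P (a + of_nat k) = 0"
      unfolding P_def poly_prod by (intro prod_zero) auto
    then show "poly (AS_poly p c - P) (a + of_nat k) = 0"
      using assms by (simp add: poly_AS_poly frobenius_add frobenius_of_nat)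
  qed
  ultimately show False
    by simp
qed

lemma AS_eq_imp_translate:
  assumes "(x::'a) ^ p - x = a ^ p - a"
  shows "\<exists>k<p. x = a + of_nat k"
proof -
  have "poly (AS_poly p (a ^ p - a)) x = 0"
    using assms by (simp add: poly_AS_poly)
  then obtain k where "k < p" "poly [:- (a + of_nat k), 1:] x = 0"
    by (auto simp: AS_poly_eq_prod poly_prod prod_zero_iff simp del: poly_pCons)
  then show ?thesis
    by (auto simp: algebra_simps)
qed

end

section \<open>The Artin--Schreier extension \<open>K(\<alpha>)\<close>\<close>

context
  fixes p :: nat and K :: "'a::field set" and \<alpha> f :: 'a
  assumes p_prime: "prime p" and char_p: "CHAR('a) = p" and K: "is_subfield K"
    and \<alpha>_notin_K: "\<alpha> \<notin> K" and f_in_K: "f \<in> K" and AS_root: "\<alpha> ^ p - \<alpha> = f"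
  notes K_subring = subfield_is_subring[OF K] and p_ge_2 = prime_ge_2_nat[OF p_prime]
begin

lemma AS_poly_over_K: "AS_poly p f \<in> polys_over K"
  using AS_poly_in_polys_over[OF K_subring f_in_K] .

lemma AS_poly_root_translate: "poly (AS_poly p f) (\<alpha> + of_nat k) = 0"
  using AS_root
  by (simp add: poly_AS_poly frobenius_add[OF p_prime char_p] frobenius_of_nat[OF p_prime char_p])

lemma AS_poly_ne_0: "AS_poly p f \<noteq> 0"
  using lead_coeff_AS_poly[OF p_ge_2, of f] by auto

text \<open>A monic factor is a product of \<open>card S\<close> linear factors \<open>X - (\<alpha> + k)\<close>; its subleading
  coefficient \<open>-card S \<cdot> \<alpha> - \<Sum>k\<close> lies in \<open>K\<close>, so \<open>card S\<close> vanishes in the prime field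
  as \<open>\<alpha> \<notin> K\<close>.\<close>

lemma monic_dvd_AS_poly_degree:
  assumes G: "G \<in> polys_over K" "lead_coeff G = 1" "G dvd AS_poly p f"
  shows "degree G = 0 \<or> degree G = p"
proof -
  obtain S where S: "S \<subseteq> {..<p}" "G = (\<Prod>k\<in>S. [:- (\<alpha> + of_nat k), 1:])"
    using monic_dvd_prod_linear[of "{..<p}" G "\<lambda>k. \<alpha> + of_nat k"] G
    by (auto simp: AS_poly_eq_prod[OF p_prime char_p AS_root])
  have fin: "finite S"
    using S(1) finite_subset by blast
  have deg: "degree G = card S"
    unfolding S(2) by (simp add: degree_prod_sum_eq fin)
  have "card S \<le> p"
    using card_mono[OF _ S(1)] by simp
  show ?thesis
  proof (rule ccontr)
    assume "\<not> ?thesis"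
    then have ne: "S \<noteq> {}" and "card S < p"
      using deg \<open>card S \<le> p\<close> by auto
    then have card_ne_0: "(of_nat (card S) :: 'a) \<noteq> 0"
      by (simp add: of_nat_eq_0_iff_dvd_char[OF p_prime char_p] fin card_gt_0_iff nat_dvd_not_less)
    have "coeff G (card S - 1) = - (of_nat (card S) * \<alpha> + (\<Sum>k\<in>S. of_nat k))"
      unfolding S(2) coeff_prod_linear_subdegree[OF fin ne] by (simp add: sum.distrib)
    then have "- coeff G (card S - 1) = of_nat (card S) * \<alpha> + (\<Sum>k\<in>S. of_nat k)"
      by simp
    then have "of_nat (card S) * \<alpha> = - coeff G (card S - 1) - (\<Sum>k\<in>S. of_nat k)"
      by simp
    also have "\<dots> \<in> K"
      using G(1) K_subring
      by (intro subring_diff subring_uminus subring_sum subring_of_nat polys_overD)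
    finally have "of_nat (card S) * \<alpha> \<in> K" .
    then have "inverse (of_nat (card S)) * (of_nat (card S) * \<alpha>) \<in> K"
      by (rule subring_mult[OF K_subring subfield_inverse[OF K subring_of_nat[OF K_subring]]])
    with card_ne_0 \<alpha>_notin_K show False
      by (simp flip: mult.assoc)
  qed
qed

lemma p_le_degree_if_root:
  assumes R: "R \<in> polys_over K" "R \<noteq> 0" "poly R \<alpha> = 0"
  shows "p \<le> degree R"
proof -
  obtain G where G: "G \<in> polys_over K" "G \<noteq> 0" "poly G \<alpha> = 0"
    and G_min: "\<And>H. H \<in> polys_over K \<Longrightarrow> H \<noteq> 0 \<Longrightarrow> poly H \<alpha> = 0 \<Longrightarrow> degree G \<le> degree H"
    using ex_has_least_nat[of "\<lambda>H. H \<in> polys_over K \<and> H \<noteq> 0 \<and> poly H \<alpha> = 0" R degree] R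
    by blast
  define G' where "G' = smult (inverse (lead_coeff G)) G"
  have G': "G' \<in> polys_over K" "lead_coeff G' = 1" "degree G' = degree G" "poly G' \<alpha> = 0"
    using G K unfolding G'_def
    by (simp_all add: polys_over_smult K_subring subfield_inverse polys_overD)
  have "AS_poly p f mod G' = 0"
  proof (rule ccontr)
    assume ne: "AS_poly p f mod G' \<noteq> 0"
    have "AS_poly p f mod G' \<in> polys_over K"
      using K_subring G'(1,2) AS_poly_over_K by (rule polys_over_mod_monic)
    moreover have "poly (AS_poly p f mod G') \<alpha> = 0"
      using AS_poly_root_translate[of 0] G'(4) by (simp add: poly_mod_eq_0)
    ultimately have "degree G \<le> degree (AS_poly p f mod G')"
      using G_min ne by blast
    moreover have "degree (AS_poly p f mod G') < degree G'"
      using ne G'(2) by (intro degree_mod_less') auto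
    ultimately show False
      using G'(3) by simp
  qed
  then have "degree G' = 0 \<or> degree G' = p"
    using G'(1,2) by (intro monic_dvd_AS_poly_degree) (simp_all add: mod_eq_0_iff_dvd)
  moreover have "degree G' \<noteq> 0"
    using poly_zero[OF G'(4)] G'(2) by auto
  ultimately show ?thesis
    using G_min[OF R] G'(3) by simp
qed

lemma AS_poly_dvd_if_root:
  assumes R: "R \<in> polys_over K" "poly R \<alpha> = 0"
  shows "AS_poly p f dvd R"
proof -
  have "R mod AS_poly p f \<in> polys_over K"
    using K_subring AS_poly_over_K lead_coeff_AS_poly[OF p_ge_2] R(1)
    by (rule polys_over_mod_monic)
  moreover have "poly (R mod AS_poly p f) \<alpha> = 0"
    using R(2) AS_poly_root_translate[of 0] by (simp add: poly_mod_eq_0)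
  moreover have "R mod AS_poly p f = 0 \<or> degree (R mod AS_poly p f) < p"
    using degree_mod_less[OF AS_poly_ne_0, of R]
    by (simp add: degree_AS_poly[OF p_ge_2])
  ultimately have "R mod AS_poly p f = 0"
    using p_le_degree_if_root by fastforce
  then show ?thesis
    by (simp add: mod_eq_0_iff_dvd)
qed

lemma root_translate:
  assumes "R \<in> polys_over K" "poly R \<alpha> = 0"
  shows "poly R (\<alpha> + of_nat k) = 0"
proof -
  obtain Q where "R = AS_poly p f * Q"
    using AS_poly_dvd_if_root[OF assms] ..
  then show ?thesis
    by (simp add: AS_poly_root_translate)
qed

lemma value_in_K_if_translation_invariant:
  assumes Q: "Q \<in> polys_over K" "poly Q (\<alpha> + 1) = poly Q \<alpha>"
  shows "poly Q \<alpha> \<in> K"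
proof -
  have step: "poly Q (\<alpha> + of_nat (Suc k)) = poly Q (\<alpha> + of_nat k)" for k
  proof -
    define D where "D = pcompose Q [:1, 1:] - Q"
    have "D \<in> polys_over K"
      unfolding D_def using Q(1) K_subring
      by (simp add: polys_over_diff polys_over_pcompose polys_over_pCons polys_over_const
          subring_one)
    moreover have "poly D \<alpha> = 0"
      using Q(2) by (simp add: D_def poly_pcompose add.commute)
    ultimately have "poly D (\<alpha> + of_nat k) = 0"
      by (rule root_translate)
    then show ?thesis
      by (simp add: D_def poly_pcompose algebra_simps)
  qed
  have invariant: "poly Q (\<alpha> + of_nat k) = poly Q \<alpha>" for k
  proof (induction k)
    case (Suc k)
    then show ?case
      using step[of k] by simp
  qed simp
  define Q0 where "Q0 = Q mod AS_poly p f"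
  have Q0: "Q0 \<in> polys_over K"
    unfolding Q0_def using K_subring AS_poly_over_K lead_coeff_AS_poly[OF p_ge_2] Q(1)
    by (rule polys_over_mod_monic)
  have "degree Q0 < p"
    using degree_mod_less[OF AS_poly_ne_0, of Q] p_ge_2
    by (auto simp: Q0_def degree_AS_poly[OF p_ge_2])
  have "Q0 = [:poly Q \<alpha>:]"
  proof (rule ccontr)
    assume "Q0 \<noteq> [:poly Q \<alpha>:]"
    then have "p \<le> degree (Q0 - [:poly Q \<alpha>:])"
    proof (intro char_le_degree_if_vanishes_on_translates[OF p_prime char_p])
      fix k
      have "poly Q0 (\<alpha> + of_nat k) = poly Q (\<alpha> + of_nat k)"
        using AS_poly_root_translate[of k] by (simp add: Q0_def flip: minus_div_mult_eq_mod)
      then show "poly (Q0 - [:poly Q \<alpha>:]) (\<alpha> + of_nat k) = 0"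
        by (simp add: invariant)
    qed simp
    moreover have "degree (Q0 - [:poly Q \<alpha>:]) \<le> degree Q0"
      using degree_diff_le_max[of Q0 "[:poly Q \<alpha>:]"] by simp
    ultimately show False
      using \<open>degree Q0 < p\<close> by simp
  qed
  then show ?thesis
    using polys_overD[OF Q0, of 0] by simp
qed

text \<open>The inverse of \<open>P(\<alpha>) \<noteq> 0\<close> is \<open>P(\<alpha> + 1) \<cdots> P(\<alpha> + p - 1) / N\<close>, where the norm
  \<open>N = P(\<alpha>) P(\<alpha> + 1) \<cdots> P(\<alpha> + p - 1)\<close> lies in \<open>K\<close>, being invariant under
  \<open>\<alpha> \<mapsto> \<alpha> + 1\<close>.\<close>

lemma inverse_poly_value:
  assumes P: "P \<in> polys_over K" "poly P \<alpha> \<noteq> 0"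
  shows "\<exists>Q\<in>polys_over K. poly P \<alpha> * poly Q \<alpha> = 1"
proof -
  define T where "T k = pcompose P [:of_nat k, 1:]" for k
  have T: "T k \<in> polys_over K" "poly (T k) x = poly P (of_nat k + x)" for k x
    unfolding T_def using P(1) K_subring
    by (simp_all add: polys_over_pcompose polys_over_pCons polys_over_const subring_of_nat
        subring_one poly_pcompose)
  have nonzero: "poly P (of_nat k + \<alpha>) \<noteq> 0" if "k < p" for k
  proof
    assume "poly P (of_nat k + \<alpha>) = 0"
    then have "poly (T k) (\<alpha> + of_nat (p - k)) = 0"
      using T by (intro root_translate) simp_all
    moreover have "(of_nat k + (\<alpha> + of_nat (p - k)) :: 'a) = \<alpha>"
      using that of_nat_CHAR[where 'a='a] char_p
      by (simp flip: of_nat_add add.assoc add: add.commute)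
    ultimately show False
      using P(2) by (simp add: T)
  qed
  obtain q where q: "p = Suc q"
    using p_prime by (cases p) auto
  define N where "N = (\<Prod>k<p. T k)"
  have N: "poly N x = (\<Prod>k<p. poly P (of_nat k + x))" for x
    by (simp add: N_def poly_prod T)
  have "poly N (\<alpha> + 1) = poly N \<alpha>"
  proof -
    have "poly N (\<alpha> + 1) = (\<Prod>k<q. poly P (of_nat (Suc k) + \<alpha>)) * poly P (of_nat p + \<alpha>)"
      by (simp add: N q ac_simps)
    also have "\<dots> = poly P \<alpha> * (\<Prod>k<q. poly P (of_nat (Suc k) + \<alpha>))"
      using of_nat_CHAR[where 'a='a] char_p by simp
    also have "\<dots> = poly N \<alpha>"
      by (simp add: N q prod.lessThan_Suc_shift del: prod.lessThan_Suc)
    finally show ?thesis .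
  qed
  moreover have "N \<in> polys_over K"
    unfolding N_def using K_subring T(1) by (rule polys_over_prod)
  ultimately have "poly N \<alpha> \<in> K"
    by (intro value_in_K_if_translation_invariant)
  moreover have "poly N \<alpha> \<noteq> 0"
    using nonzero by (simp add: N)
  moreover have "poly N \<alpha> = poly P \<alpha> * poly (\<Prod>k<q. T (Suc k)) \<alpha>"
    by (simp add: N q poly_prod T prod.lessThan_Suc_shift del: prod.lessThan_Suc)
  ultimately have "poly P \<alpha> * poly (smult (inverse (poly N \<alpha>)) (\<Prod>k<q. T (Suc k))) \<alpha> = 1"
    by (simp add: field_simps)
  moreover have "smult (inverse (poly N \<alpha>)) (\<Prod>k<q. T (Suc k)) \<in> polys_over K"
    using \<open>poly N \<alpha> \<in> K\<close> K K_subring T(1)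
    by (intro polys_over_smult polys_over_prod subfield_inverse)
  ultimately show ?thesis
    by blast
qed

lemma gen_field_subset_poly_values: "gen_field (insert \<alpha> K) \<subseteq> {poly P \<alpha> |P. P \<in> polys_over K}"
proof (rule gen_field_least)
  let ?V = "{poly P \<alpha> |P. P \<in> polys_over K}"
  have closed: "poly P \<alpha> \<in> ?V" if "P \<in> polys_over K" for P
    using that by blast
  show "insert \<alpha> K \<subseteq> ?V"
  proof
    fix x assume "x \<in> insert \<alpha> K"
    then consider "x = \<alpha>" | "x \<in> K"
      by blast
    then show "x \<in> ?V"
    proof cases
      case 1
      then show ?thesis
        using closed[of "[:0, 1:]"] K_subring
        by (simp add: polys_over_pCons polys_over_const subring_zero subring_one)
    next
      case 2
      then show ?thesis
        using closed[of "[:x:]"] K_subring by (simp add: polys_over_const)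
    qed
  qed
  show "is_subfield ?V"
    unfolding is_subfield_def
  proof (intro conjI ballI)
    show "0 \<in> ?V" "1 \<in> ?V"
      using closed[OF polys_over_0[OF K_subring]] closed[OF polys_over_1[OF K_subring]] by simp_all
  next
    fix x y assume "x \<in> ?V" "y \<in> ?V"
    then obtain P Q where "P \<in> polys_over K" "Q \<in> polys_over K" "x = poly P \<alpha>" "y = poly Q \<alpha>"
      by blast
    then show "x + y \<in> ?V" "x - y \<in> ?V" "x * y \<in> ?V"
      using closed[of "P + Q"] closed[of "P - Q"] closed[of "P * Q"] K_subring
      by (simp_all add: polys_over_add polys_over_diff polys_over_mult)
  next
    fix x assume "x \<in> ?V"
    then obtain P where P: "P \<in> polys_over K" "x = poly P \<alpha>"
      by blast
    show "inverse x \<in> ?V"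
    proof (cases "x = 0")
      case True
      then show ?thesis
        using closed[OF polys_over_0[OF K_subring]] by simp
    next
      case False
      then obtain Q where "Q \<in> polys_over K" "x * poly Q \<alpha> = 1"
        using inverse_poly_value P by auto
      then show ?thesis
        using closed[of Q] by (simp add: inverse_unique)
    qed
  qed
qed

lemma AS_generator_relation:
  assumes gen: "gen_field (insert \<alpha> K) = UNIV"
    and \<beta>: "\<beta> ^ p - \<beta> = f'" "f' \<in> K" "\<beta> \<notin> K"
  shows "\<exists>j h. 0 < j \<and> j < p \<and> h \<in> K \<and> f' = of_nat j * f + h ^ p - h"
proof -
  obtain P where P: "P \<in> polys_over K" "\<beta> = poly P \<alpha>"
    using gen_field_subset_poly_values gen by blast
  have "P ^ p - P - [:f':] \<in> polys_over K"
    using P(1) \<beta>(2) K_subring by (simp add: polys_over_diff polys_over_power polys_over_const)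
  moreover have "poly (P ^ p - P - [:f':]) \<alpha> = 0"
    using P(2) \<beta>(1) by simp
  ultimately have "poly (P ^ p - P - [:f':]) (\<alpha> + of_nat 1) = 0"
    by (rule root_translate)
  then have "poly P (\<alpha> + 1) ^ p - poly P (\<alpha> + 1) = \<beta> ^ p - \<beta>"
    using \<beta>(1) by simp
  then obtain j where j: "j < p" "poly P (\<alpha> + 1) = \<beta> + of_nat j"
    using AS_eq_imp_translate[OF p_prime char_p] by blast
  define h where "h = \<beta> - of_nat j * \<alpha>"
  have "P - [:0, of_nat j:] \<in> polys_over K"
    using P(1) K_subring
    by (simp add: polys_over_diff polys_over_pCons polys_over_const subring_zero subring_of_nat)
  moreover have "poly (P - [:0, of_nat j:]) (\<alpha> + 1) = poly (P - [:0, of_nat j:]) \<alpha>"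
    using j(2) P(2) by (simp add: algebra_simps)
  ultimately have "poly (P - [:0, of_nat j:]) \<alpha> \<in> K"
    by (rule value_in_K_if_translation_invariant)
  then have "h \<in> K"
    using P(2) by (simp add: h_def mult.commute)
  have "j \<noteq> 0"
  proof
    assume "j = 0"
    with \<open>h \<in> K\<close> \<beta>(3) show False
      by (simp add: h_def)
  qed
  have "f' = (of_nat j * \<alpha> + h) ^ p - (of_nat j * \<alpha> + h)"
    using \<beta>(1) by (simp add: h_def)
  also have "\<dots> = of_nat j * f + h ^ p - h"
    using AS_root
    by (simp add: frobenius_add[OF p_prime char_p] frobenius_of_nat[OF p_prime char_p]
        power_mult_distrib algebra_simps)
  finally show ?thesis
    using j(1) \<open>j \<noteq> 0\<close> \<open>h \<in> K\<close> by blast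
qed

end

section \<open>Valuations of Artin--Schreier generators\<close>

lemma units_of_ring_iff: "u \<in> units_of_ring A \<longleftrightarrow> u \<in> A \<and> u \<notin> max_ideal A"
  by (auto simp: units_of_ring_def max_ideal_def)

lemma max_ideal_subset: "max_ideal A \<subseteq> A"
  by (auto simp: max_ideal_def)

context
  fixes A :: "'a::field set"
  assumes A: "is_subring A"
begin

lemma max_ideal_mult:
  assumes a: "a \<in> max_ideal A" and b: "b \<in> A"
  shows "a * b \<in> max_ideal A"
proof -
  have "a * b \<in> A"
    using a b max_ideal_subset A by (blast intro: subring_mult)
  moreover have "inverse (a * b) \<notin> A" if "a * b \<noteq> 0"
  proof
    assume "inverse (a * b) \<in> A"
    then have "b * inverse (a * b) \<in> A"
      by (rule subring_mult[OF A b])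
    with that a show False
      by (simp add: max_ideal_def field_simps)
  qed
  ultimately show ?thesis
    by (auto simp: max_ideal_def)
qed

lemma max_ideal_mult_left: "a \<in> A \<Longrightarrow> b \<in> max_ideal A \<Longrightarrow> a * b \<in> max_ideal A"
  using max_ideal_mult[of b a] by (simp add: mult.commute)

lemma unit_if_power_eq_1:
  assumes "i \<in> A" "i ^ Suc n = 1"
  shows "i \<in> units_of_ring A"
proof -
  have "inverse i = i ^ n"
    using assms(2) by (intro inverse_unique) simp
  then show ?thesis
    using assms by (auto simp: units_of_ring_def subring_power A)
qed

lemma val_le_mult_unit:
  assumes "t \<noteq> 0" "z \<in> A" "w \<in> units_of_ring A"
  shows "val_le A (w * t) (z * t)"
proof -
  have "z * t / (w * t) = z * inverse w"
    using assms(1) by (simp add: field_simps)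
  then show ?thesis
    using assms by (auto simp: val_le_def units_of_ring_def subring_mult A)
qed

end

lemma valuation_ring_subring: "valuation_ring K A \<Longrightarrow> is_subring A"
  and valuation_ring_subfield: "valuation_ring K A \<Longrightarrow> is_subfield K"
  by (simp_all add: valuation_ring_def)

context
  fixes K A :: "'a::field set"
  assumes VR: "valuation_ring K A"
  notes A = valuation_ring_subring[OF VR]
begin

lemma inverse_in_max_ideal:
  assumes "x \<in> K" "x \<notin> A"
  shows "inverse x \<in> max_ideal A"
  using assms VR subring_zero[OF A] by (auto simp: valuation_ring_def max_ideal_def)

lemma max_ideal_add:
  assumes a: "a \<in> max_ideal A" and b: "b \<in> max_ideal A"
  shows "a + b \<in> max_ideal A"
proof (cases "a = 0 \<or> b = 0")
  case False
  have "a / b \<in> K"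
    using a b VR max_ideal_subset
    by (intro subfield_divide valuation_ring_subfield) (auto simp: valuation_ring_def)
  then have "a / b \<in> A \<or> b / a \<in> A"
    using VR False by (auto simp: valuation_ring_def)
  then show ?thesis
  proof
    assume "a / b \<in> A"
    then have "b * (a / b + 1) \<in> max_ideal A"
      using A b by (intro max_ideal_mult subring_add subring_one)
    then show ?thesis
      using False by (simp add: field_simps)
  next
    assume "b / a \<in> A"
    then have "a * (b / a + 1) \<in> max_ideal A"
      using A a by (intro max_ideal_mult subring_add subring_one)
    then show ?thesis
      using False by (simp add: field_simps)
  qed
qed (use a b in auto)

lemma max_ideal_uminus: "a \<in> max_ideal A \<Longrightarrow> - a \<in> max_ideal A"
  using max_ideal_mult[OF A, of a "-1"] subring_uminus[OF A subring_one[OF A]] by simp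

lemma max_ideal_diff: "a \<in> max_ideal A \<Longrightarrow> b \<in> max_ideal A \<Longrightarrow> a - b \<in> max_ideal A"
  using max_ideal_add[of a "- b"] max_ideal_uminus by simp

lemma max_ideal_power: "a \<in> max_ideal A \<Longrightarrow> 0 < n \<Longrightarrow> a ^ n \<in> max_ideal A"
  using max_ideal_mult[OF A, of a "a ^ (n - 1)"] subring_power[OF A] max_ideal_subset
  by (cases n) auto

lemma unit_add_max_ideal:
  assumes u: "u \<in> units_of_ring A" and a: "a \<in> max_ideal A"
  shows "u + a \<in> units_of_ring A"
proof -
  have "u + a \<in> A"
    using u a A max_ideal_subset by (blast intro: subring_add dest: units_of_ring_iff[THEN iffD1])
  moreover have "u + a \<notin> max_ideal A"
    using max_ideal_diff[of "u + a" a] a u by (auto simp: units_of_ring_iff)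
  ultimately show ?thesis
    by (simp add: units_of_ring_iff)
qed

lemma unit_diff_max_ideal: "u \<in> units_of_ring A \<Longrightarrow> a \<in> max_ideal A \<Longrightarrow> u - a \<in> units_of_ring A"
  using unit_add_max_ideal[of u "- a"] max_ideal_uminus by simp

lemma val_le_AS_if_pole_dominant:
  assumes p: "2 \<le> p" and i: "i \<in> A" and h: "h \<in> K" "h \<notin> A" and f: "f / h ^ p \<in> max_ideal A"
  shows "val_le A (i * f + h ^ p - h) f"
proof -
  obtain q where q: "p = Suc q" "0 < q"
    using p by (cases p) auto
  have "h \<noteq> 0"
    using h subring_zero[OF A] by auto
  have "inverse h ^ q \<in> max_ideal A"
    using max_ideal_power[OF inverse_in_max_ideal[OF h] q(2)] .
  then have "1 + (i * (f / h ^ p) - inverse h ^ q) \<in> units_of_ring A"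
    using A i f
    by (intro unit_add_max_ideal max_ideal_diff max_ideal_mult_left)
      (simp_all add: units_of_ring_def subring_one)
  then have "val_le A ((1 + (i * (f / h ^ p) - inverse h ^ q)) * h ^ p) (f / h ^ p * h ^ p)"
    using A f max_ideal_subset \<open>h \<noteq> 0\<close> by (intro val_le_mult_unit) auto
  moreover have "(1 + (i * (f / h ^ p) - inverse h ^ q)) * h ^ p = i * f + h ^ p - h"
    using \<open>h \<noteq> 0\<close> by (simp add: q field_simps power_inverse)
  ultimately show ?thesis
    using \<open>h \<noteq> 0\<close> by simp
qed

lemma val_le_AS_if_f_dominant:
  assumes f: "f \<noteq> 0" and i: "i \<in> units_of_ring A" and h: "(h ^ p - h) / f \<in> max_ideal A"
  shows "val_le A (i * f + h ^ p - h) f"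
proof -
  have "val_le A ((i + (h ^ p - h) / f) * f) (1 * f)"
    using f i h A by (intro val_le_mult_unit unit_add_max_ideal subring_one)
  moreover have "(i + (h ^ p - h) / f) * f = i * f + h ^ p - h"
    using f by (simp add: field_simps)
  ultimately show ?thesis
    by simp
qed

lemma val_le_AS_if_not_p_dvd_val:
  assumes p: "2 \<le> p" and f: "f \<in> K" "f \<notin> A" "\<not> p_dvd_val K A p f"
    and i: "i \<in> units_of_ring A" and h: "h \<in> K"
  shows "val_le A (i * f + h ^ p - h) f"
proof (cases "h \<in> A")
  case True
  have "(h ^ p - h) * inverse f \<in> max_ideal A"
    using True A inverse_in_max_ideal[OF f(1,2)]
    by (intro max_ideal_mult_left subring_diff subring_power)
  then show ?thesis
    using f subring_zero[OF A] i by (intro val_le_AS_if_f_dominant) (auto simp: divide_inverse)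
next
  case False
  have "h \<noteq> 0" "f \<noteq> 0"
    using h False f subring_zero[OF A] by auto
  have "f / h ^ p \<in> K"
    using VR f h
    by (intro subfield_divide subring_power valuation_ring_subfield subfield_is_subring)
  consider "f / h ^ p \<in> max_ideal A" | "f / h ^ p \<in> units_of_ring A" | "f / h ^ p \<notin> A"
    by (auto simp: units_of_ring_iff)
  then show ?thesis
  proof cases
    case 1
    then show ?thesis
      using p i h False by (intro val_le_AS_if_pole_dominant) (auto simp: units_of_ring_iff)
  next
    case 2
    with h \<open>h \<noteq> 0\<close> f(3) show ?thesis
      by (auto simp: p_dvd_val_def)
  next
    case 3
    have "inverse h ^ (p - 1) \<in> A"
      using inverse_in_max_ideal[OF h False] A max_ideal_subset by (blast intro: subring_power)
    then have "inverse (f / h ^ p) * (1 - inverse h ^ (p - 1)) \<in> max_ideal A"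
      using inverse_in_max_ideal[OF \<open>f / h ^ p \<in> K\<close> 3] A
      by (intro max_ideal_mult subring_diff subring_one)
    moreover have "inverse (f / h ^ p) * (1 - inverse h ^ (p - 1)) = (h ^ p - h) / f"
      using p \<open>h \<noteq> 0\<close> \<open>f \<noteq> 0\<close>
      by (cases p) (simp_all add: field_simps power_inverse)
    ultimately show ?thesis
      using \<open>f \<noteq> 0\<close> i by (intro val_le_AS_if_f_dominant) simp_all
  qed
qed

context
  fixes p :: nat
  assumes p_prime: "prime p" and char_p: "CHAR('a) = p"
begin

lemma of_nat_in_units_below_char:
  assumes "0 < j" "j < p"
  shows "(of_nat j :: 'a) \<in> units_of_ring A"
proof -
  obtain q where q: "p = Suc (Suc q)"
    using prime_ge_2_nat[OF p_prime] by (metis add_2_eq_Suc le_Suc_ex)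
  have "(of_nat j :: 'a) \<noteq> 0"
    using assms by (simp add: of_nat_eq_0_iff_dvd_char[OF p_prime char_p] nat_dvd_not_less)
  then have "(of_nat j :: 'a) ^ Suc q = 1"
    using frobenius_of_nat[OF p_prime char_p, of j] by (simp add: q)
  then show ?thesis
    using A by (intro unit_if_power_eq_1 subring_of_nat)
qed

text \<open>In cases (ii) and (iii) a cancellation of the leading term of \<open>i f + h\<^sup>p - h\<close> would exhibit
  \<open>-hg/i\<close> (resp. \<open>-h/i\<close>) as a solution of the residue equation excluded by hypothesis,
  because \<open>(-y/i)\<^sup>p = -y\<^sup>p/i\<close> for \<open>i\<close> in the prime field.\<close>

lemma val_le_AS_if_nonpower_unit:
  assumes g: "g \<in> max_ideal A" "g \<noteq> 0"
    and u: "u \<in> units_of_ring A" "\<not> (\<exists>x\<in>A. u - x ^ p \<in> max_ideal A)"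
    and i: "i \<in> units_of_ring A" "i ^ p = i" and h: "h \<in> K"
  shows "val_le A (i * (u / g ^ p) + h ^ p - h) (u / g ^ p)"
proof (cases "h * g \<in> A")
  case False
  have "g \<in> K"
    using g max_ideal_subset VR by (auto simp: valuation_ring_def)
  then have "h * g \<in> K"
    using h VR by (intro subring_mult subfield_is_subring valuation_ring_subfield)
  then have "u * inverse (h * g) ^ p \<in> max_ideal A"
    using A u inverse_in_max_ideal[OF _ False] prime_gt_0_nat[OF p_prime]
    by (intro max_ideal_mult_left max_ideal_power) (auto simp: units_of_ring_iff)
  moreover have "h \<notin> A"
    using False g max_ideal_subset A by (blast intro: subring_mult)
  ultimately show ?thesis
    using prime_ge_2_nat[OF p_prime] i h
    by (intro val_le_AS_if_pole_dominant)
      (auto simp: units_of_ring_iff power_mult_distrib field_simps)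
next
  case True
  define t where "t = h * g"
  have inv_i: "inverse i \<in> A" "i \<noteq> 0"
    using i by (auto simp: units_of_ring_def)
  have "i * u + t ^ p \<notin> max_ideal A"
  proof
    assume "i * u + t ^ p \<in> max_ideal A"
    then have "inverse i * (i * u + t ^ p) \<in> max_ideal A"
      by (rule max_ideal_mult_left[OF A inv_i(1)])
    then have "u - (- (t / i)) ^ p \<in> max_ideal A"
      using inv_i(2) by (simp add: frobenius_neg_div_fixed[OF p_prime char_p i(2)] field_simps)
    moreover have "- (t / i) \<in> A"
      using True inv_i A by (auto simp: t_def divide_inverse intro: subring_uminus subring_mult)
    ultimately show False
      using u(2) by blast
  qed
  then have "i * u + t ^ p \<in> units_of_ring A"
    using A True u i
    by (auto simp: units_of_ring_iff t_def intro: subring_add subring_mult subring_power)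
  moreover have "t * g ^ (p - 1) \<in> max_ideal A"
    using True g(1) prime_gt_1_nat[OF p_prime] unfolding t_def
    by (intro max_ideal_mult_left[OF A] max_ideal_power) simp_all
  ultimately have
    "val_le A ((i * u + t ^ p - t * g ^ (p - 1)) * inverse (g ^ p)) (u * inverse (g ^ p))"
    using A g u by (intro val_le_mult_unit unit_diff_max_ideal) (auto simp: units_of_ring_iff)
  moreover have "(i * u + t ^ p - t * g ^ (p - 1)) * inverse (g ^ p) = i * (u / g ^ p) + h ^ p - h"
    using g(2) prime_gt_0_nat[OF p_prime]
    by (cases p) (simp_all add: t_def field_simps power_mult_distrib)
  ultimately show ?thesis
    by (simp add: divide_inverse)
qed

lemma val_le_AS_if_unit_not_AS_residue:
  assumes f: "f \<in> units_of_ring A" "\<not> (\<exists>x\<in>A. f - (x ^ p - x) \<in> max_ideal A)"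
    and i: "i \<in> units_of_ring A" "i ^ p = i" and h: "h \<in> K"
  shows "val_le A (i * f + h ^ p - h) f"
proof (cases "h \<in> A")
  case True
  have inv_i: "inverse i \<in> A" "i \<noteq> 0"
    using i by (auto simp: units_of_ring_def)
  have "i * f + h ^ p - h \<notin> max_ideal A"
  proof
    assume "i * f + h ^ p - h \<in> max_ideal A"
    then have "inverse i * (i * f + h ^ p - h) \<in> max_ideal A"
      by (rule max_ideal_mult_left[OF A inv_i(1)])
    then have "f - ((- (h / i)) ^ p - (- (h / i))) \<in> max_ideal A"
      using inv_i(2) by (simp add: frobenius_neg_div_fixed[OF p_prime char_p i(2)] field_simps)
    moreover have "- (h / i) \<in> A"
      using True inv_i A by (auto simp: divide_inverse intro: subring_uminus subring_mult)
    ultimately show False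
      using f(2) by blast
  qed
  then have "i * f + h ^ p - h \<in> units_of_ring A"
    using A True f i
    by (auto simp: units_of_ring_iff intro: subring_add subring_diff subring_mult subring_power)
  then have "val_le A ((i * f + h ^ p - h) * 1) (f * 1)"
    using A f by (intro val_le_mult_unit) (auto simp: units_of_ring_iff)
  then show ?thesis
    by simp
next
  case False
  have "f * inverse h ^ p \<in> max_ideal A"
    using A f inverse_in_max_ideal[OF h False] prime_gt_0_nat[OF p_prime]
    by (intro max_ideal_mult_left max_ideal_power) (auto simp: units_of_ring_iff)
  then show ?thesis
    using prime_ge_2_nat[OF p_prime] i h False
    by (intro val_le_AS_if_pole_dominant)
      (auto simp: units_of_ring_iff divide_inverse power_inverse)
qed

end

end

theorem corollary3p2p4:
  fixes K A :: "'l::field set" and p :: nat and f :: 'l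
  assumes "prime p"
    and "CHAR('l) = p"
    and "valuation_ring K A"
    and "henselian A"
    and "A \<noteq> K"
    and "K \<noteq> UNIV"
    and "AS_generates p K f"
    and "(f \<notin> A \<and> \<not> p_dvd_val K A p f)
       \<or> (f \<notin> A \<and> (\<exists>g u. g \<in> max_ideal A \<and> g \<noteq> 0 \<and> u \<in> units_of_ring A \<and>
              f = u / g ^ p \<and> \<not> (\<exists>x\<in>A. u - x ^ p \<in> max_ideal A)))
       \<or> (f \<in> units_of_ring A \<and> \<not> (\<exists>x\<in>A. f - (x ^ p - x) \<in> max_ideal A))"
  shows "best_generator p K A f"
proof -
  have K: "is_subfield K"
    using assms(3) by (rule valuation_ring_subfield)
  obtain \<alpha> where f: "f \<in> K" "\<alpha> ^ p - \<alpha> = f" and gen: "gen_field (insert \<alpha> K) = UNIV"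
    using assms(7) unfolding AS_generates_def by blast
  have \<alpha>: "\<alpha> \<notin> K"
    using gen_field_insert_eq_UNIV_imp_notin[OF K assms(6) gen] .
  have "val_le A f' f" if "AS_generates p K f'" for f'
  proof -
    obtain \<beta> where "\<beta> ^ p - \<beta> = f'" "f' \<in> K" "\<beta> \<notin> K"
      using \<open>AS_generates p K f'\<close> gen_field_insert_eq_UNIV_imp_notin[OF K assms(6)]
      unfolding AS_generates_def by blast
    then obtain j h where j: "0 < j" "j < p" and h: "h \<in> K" and f': "f' = of_nat j * f + h ^ p - h"
      using AS_generator_relation[OF assms(1,2) K \<alpha> f gen] by blast
    have i: "(of_nat j :: 'l) \<in> units_of_ring A" "(of_nat j :: 'l) ^ p = of_nat j"
      using of_nat_in_units_below_char[OF assms(3,1,2) j] frobenius_of_nat[OF assms(1,2)] by auto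
    from assms(8) show ?thesis
      unfolding f'
      using val_le_AS_if_not_p_dvd_val[OF assms(3) prime_ge_2_nat[OF assms(1)] f(1) _ _ i(1) h]
        val_le_AS_if_nonpower_unit[OF assms(3,1,2) _ _ _ _ i h]
        val_le_AS_if_unit_not_AS_residue[OF assms(3,1,2) _ _ i h]
      by blast
  qed
  then show ?thesis
    using assms(7) by (simp add: best_generator_def)
qed

end
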